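(* For every map $M$, the set of imbalances in $M$ is a class of homologous $(\bmod 2)$ cycles in the dual of $M$; that is, there is a cycle $c$ of $G_D$ such that the set of imbalances of $M$ (viewed as subsets of $SQ(M)=E(G_D)$) equals $\{c\triangle b: b\in V\}$, where $V$ is the coboundary space of $G_M$.
   Context: A map is a triple $M=(C_M,v_M,f_M)$ where $C_M$ is a finite cubic graph (multiple edges allowed) and $v_M,f_M$ are disjoint perfect matchings whose union is a disjoint union of 4-cycles, the squares ($SQ(M)$); $a_M$ is the third perfect matching. The vertices of $C_M$ are corners; $v_M(x)$, $a_M(x)$ denote the corner joined to $x$ by the corresponding edge. $G_M$ has vertices the cycles of $v_M\cup a_M$ and edges the squares (each joining the cycles containing its two $v_M$-edges); $G_D$ (graph of the dual $D=(C_M,f_M,v_M)$) has vertices the cycles of $f_M\cup a_M$ and edges the squares (each joining the cycles containing its two $f_M$-edges). A cycle is an edge set with all degrees even. Two cycles of $G_D$ are homologous if their symmetric difference is a boundary in the dual t-map, i.e. (with edge sets identified with $SQ(M)$) an element of the $GF(2)$-coboundary space $V$ of $G_M$. A balancing partition of $M$ is a partition $\{A,B\}$ of the corners such that $x$ and $v_M(x)$ are in different classes and $x$ and $a_M(v_M(x))$ are in the same class, for every corner $x$. A square is balanced if its opposite corners lie in the same class, unbalanced otherwise; an imbalance of $M$ is the set of unbalanced squares of some balancing partition. *)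

theory Defs
  imports Main
begin

text \<open>Maps are encoded by their set of corners X together with the three perfect
  matchings v, f, a given as fixed-point-free involutions on X (edge x -- g x).\<close>

definition is_map :: "'a set \<Rightarrow> ('a \<Rightarrow> 'a) \<Rightarrow> ('a \<Rightarrow> 'a) \<Rightarrow> ('a \<Rightarrow> 'a) \<Rightarrow> bool" where
  "is_map X v f a \<longleftrightarrow> finite X \<and>
     (\<forall>x\<in>X. v x \<in> X \<and> f x \<in> X \<and> a x \<in> X \<and>
        v (v x) = x \<and> f (f x) = x \<and> a (a x) = x \<and>
        v x \<noteq> x \<and> f x \<noteq> x \<and> a x \<noteq> x \<and>
        v x \<noteq> f x \<and> f (v (f (v x))) = x)"

text \<open>Corner set of the cycle of g \<union> h through x (connected component of the 2-factor).\<close>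
definition comp :: "'a set \<Rightarrow> ('a \<Rightarrow> 'a) \<Rightarrow> ('a \<Rightarrow> 'a) \<Rightarrow> 'a \<Rightarrow> 'a set" where
  "comp X g h x = {y. (x, y) \<in> ({(z, g z) | z. z \<in> X} \<union> {(z, h z) | z. z \<in> X})\<^sup>*}"

text \<open>The square (4-cycle of v \<union> f) through x, as a set of corners.\<close>
definition sq :: "('a \<Rightarrow> 'a) \<Rightarrow> ('a \<Rightarrow> 'a) \<Rightarrow> 'a \<Rightarrow> 'a set" where
  "sq v f x = {x, v x, f (v x), v (f (v x))}"

definition SQ :: "'a set \<Rightarrow> ('a \<Rightarrow> 'a) \<Rightarrow> ('a \<Rightarrow> 'a) \<Rightarrow> 'a set set" where
  "SQ X v f = sq v f ` X"

definition medges :: "('a \<Rightarrow> 'a) \<Rightarrow> 'a set \<Rightarrow> 'a set set" where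
  "medges g s = {{y, g y} | y. y \<in> s}"

text \<open>Degree of the vertex (cycle) w in the edge set c, where the ends of a square are
  its g-edges (loops counted twice).\<close>
definition deg :: "('a \<Rightarrow> 'a) \<Rightarrow> 'a set set \<Rightarrow> 'a set \<Rightarrow> nat" where
  "deg g c w = card {(s, e). s \<in> c \<and> e \<in> medges g s \<and> e \<subseteq> w}"

text \<open>Cycles of G_D: vertices are the cycles of f \<union> a, edges are squares joining the
  cycles containing their two f-edges.\<close>
definition D_cycle :: "'a set \<Rightarrow> ('a \<Rightarrow> 'a) \<Rightarrow> ('a \<Rightarrow> 'a) \<Rightarrow> ('a \<Rightarrow> 'a) \<Rightarrow> 'a set set \<Rightarrow> bool" where
  "D_cycle X v f a c \<longleftrightarrow> c \<subseteq> SQ X v f \<and> (\<forall>w \<in> comp X f a ` X. even (deg f c w))"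

text \<open>Coboundary in G_M (vertices = cycles of v \<union> a) of a vertex set S: squares having an
  odd number of ends (v-edges) in S.\<close>
definition cobound :: "'a set \<Rightarrow> ('a \<Rightarrow> 'a) \<Rightarrow> ('a \<Rightarrow> 'a) \<Rightarrow> ('a \<Rightarrow> 'a) \<Rightarrow> 'a set set \<Rightarrow> 'a set set" where
  "cobound X v f a S = {s \<in> SQ X v f. odd (card {e \<in> medges v s. \<exists>w\<in>S. e \<subseteq> w})}"

definition cobspace :: "'a set \<Rightarrow> ('a \<Rightarrow> 'a) \<Rightarrow> ('a \<Rightarrow> 'a) \<Rightarrow> ('a \<Rightarrow> 'a) \<Rightarrow> 'a set set set" where
  "cobspace X v f a = {cobound X v f a S | S. S \<subseteq> comp X v a ` X}"

definition balancing :: "'a set \<Rightarrow> ('a \<Rightarrow> 'a) \<Rightarrow> ('a \<Rightarrow> 'a) \<Rightarrow> 'a set \<Rightarrow> bool" where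
  "balancing X v a A \<longleftrightarrow> A \<subseteq> X \<and>
     (\<forall>x\<in>X. ((x \<in> A) \<noteq> (v x \<in> A)) \<and> ((x \<in> A) = (a (v x) \<in> A)))"

definition balanced :: "('a \<Rightarrow> 'a) \<Rightarrow> ('a \<Rightarrow> 'a) \<Rightarrow> 'a set \<Rightarrow> 'a set \<Rightarrow> bool" where
  "balanced v f A s \<longleftrightarrow>
     (\<forall>y\<in>s. \<forall>z\<in>s. z \<noteq> v y \<and> z \<noteq> f y \<longrightarrow> ((y \<in> A) \<longleftrightarrow> (z \<in> A)))"

definition imbalance :: "'a set \<Rightarrow> ('a \<Rightarrow> 'a) \<Rightarrow> ('a \<Rightarrow> 'a) \<Rightarrow> 'a set \<Rightarrow> 'a set set" where
  "imbalance X v f A = {s \<in> SQ X v f. \<not> balanced v f A s}"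

definition imbalances :: "'a set \<Rightarrow> ('a \<Rightarrow> 'a) \<Rightarrow> ('a \<Rightarrow> 'a) \<Rightarrow> ('a \<Rightarrow> 'a) \<Rightarrow> 'a set set set" where
  "imbalances X v f a = {imbalance X v f A | A. balancing X v a A}"

definition symdiff :: "'b set \<Rightarrow> 'b set \<Rightarrow> 'b set" where
  "symdiff A B = (A - B) \<union> (B - A)"

end

theory Submission
  imports Defs
begin

(* A balancing partition {A, X - A} is exactly a proper 2-colouring of the cycles of v \<union> a.
   These cycles alternate between two perfect matchings, so they are even and such colourings
   exist; any two of them differ by recolouring a union of cycles of v \<union> a, i.e. a vertex
   set S of G_M. Recolouring S changes the balance of exactly the squares with one v-edge
   inside and one outside S, the coboundary of S, so the imbalances form one coset of V.
   Its members are cycles of G_D: a square is unbalanced iff its f-edges are monochromatic,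
   and on every cycle W of f \<union> a the matching a exchanges the two colour classes, which
   forces W to contain as many monochromatic f-edges inside A as outside A. *)

section \<open>Counting with involutions\<close>

definition perfect_matching_on :: "'a set \<Rightarrow> ('a \<Rightarrow> 'a) \<Rightarrow> bool" where
  "perfect_matching_on X g \<longleftrightarrow> (\<forall>x\<in>X. g x \<in> X \<and> g (g x) = x \<and> g x \<noteq> x)"

lemma perfect_matching_onD:
  "perfect_matching_on X g \<Longrightarrow> x \<in> X \<Longrightarrow> g x \<in> X \<and> g (g x) = x \<and> g x \<noteq> x"
  unfolding perfect_matching_on_def by blast

lemma card_eq_twice_card_image:
  assumes "finite Y" and g: "perfect_matching_on Y g"
    and fibres: "\<And>y z. y \<in> Y \<Longrightarrow> z \<in> Y \<Longrightarrow> \<phi> z = \<phi> y \<longleftrightarrow> z = y \<or> z = g y"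
  shows "card Y = 2 * card (\<phi> ` Y)"
proof -
  have "card Y = card (\<Union>b\<in>\<phi> ` Y. {y \<in> Y. \<phi> y = b})"
    by (rule arg_cong[where f = card]) auto
  also have "\<dots> = (\<Sum>b\<in>\<phi> ` Y. card {y \<in> Y. \<phi> y = b})"
    by (rule card_UN_disjoint) (use assms(1) in auto)
  also have "\<dots> = (\<Sum>b\<in>\<phi> ` Y. 2)"
  proof (rule sum.cong)
    fix b assume "b \<in> \<phi> ` Y"
    then obtain y where y: "y \<in> Y" "b = \<phi> y" by auto
    then have "{z \<in> Y. \<phi> z = b} = {y, g y}"
      using fibres g unfolding perfect_matching_on_def by auto
    then show "card {z \<in> Y. \<phi> z = b} = 2"
      using y g unfolding perfect_matching_on_def by auto
  qed simp
  finally show ?thesis by simp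
qed

lemma even_card_if_perfect_matching:
  assumes "finite Y" and g: "perfect_matching_on Y g"
  shows "even (card Y)"
proof -
  have "card Y = 2 * card ((\<lambda>y. {y, g y}) ` Y)"
    by (rule card_eq_twice_card_image[OF assms])
      (use g in \<open>auto simp: perfect_matching_on_def doubleton_eq_iff\<close>)
  then show ?thesis by simp
qed

lemma card_eq_if_swapped_by_involution:
  assumes "\<And>y. y \<in> P \<Longrightarrow> g y \<in> Q \<and> g (g y) = y" and "\<And>y. y \<in> Q \<Longrightarrow> g y \<in> P \<and> g (g y) = y"
  shows "card P = card Q"
  by (rule bij_betw_same_card[of g], rule bij_betw_byWitness[where f' = g]) (use assms in auto)

lemma odd_card_filter_doubleton:
  assumes "d \<noteq> e"
  shows "odd (card {x \<in> {d, e}. Q x}) \<longleftrightarrow> Q d \<noteq> Q e"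
proof -
  have "{x \<in> {d, e}. Q x} = (if Q d then {d} else {}) \<union> (if Q e then {e} else {})"
    by auto
  then show ?thesis using assms by simp
qed

section \<open>Cycles of two perfect matchings\<close>

lemma funpow_closed:
  assumes "\<And>z. z \<in> X \<Longrightarrow> g z \<in> X" and "x \<in> X"
  shows "(g ^^ k) x \<in> X"
  using assms by (induct k) auto

lemma comp_refl: "x \<in> comp X g h x"
  unfolding comp_def by simp

lemma comp_closed:
  assumes "y \<in> comp X g h x" and "y \<in> X"
  shows "g y \<in> comp X g h x" "h y \<in> comp X g h x"
  using assms unfolding comp_def by (auto intro: rtrancl_into_rtrancl)

lemma comp_subset:
  assumes "x \<in> D" and "\<And>z. z \<in> D \<Longrightarrow> g z \<in> D \<and> h z \<in> D"
  shows "comp X g h x \<subseteq> D"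
proof
  fix y assume "y \<in> comp X g h x"
  then have "(x, y) \<in> ({(z, g z) | z. z \<in> X} \<union> {(z, h z) | z. z \<in> X})\<^sup>*"
    unfolding comp_def by simp
  then show "y \<in> D"
    by (induct rule: rtrancl_induct) (use assms in auto)
qed

lemma comp_eq_if_mem:
  assumes inverse_on_X: "\<And>z. z \<in> X \<Longrightarrow> g z \<in> X \<and> h z \<in> X \<and> g (h z) = z \<and> h (g z) = z"
    and "y \<in> comp X g h x"
  shows "comp X g h y = comp X g h x"
proof -
  let ?R = "{(z, g z) | z. z \<in> X} \<union> {(z, h z) | z. z \<in> X}"
  have "sym ?R"
  proof (rule symI)
    fix p q assume "(p, q) \<in> ?R"
    then consider "p \<in> X" "q = g p" | "p \<in> X" "q = h p" by blast
    then show "(q, p) \<in> ?R"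
    proof cases
      case 1
      then have "q \<in> X" "p = h q" using inverse_on_X by auto
      then show ?thesis by blast
    next
      case 2
      then have "q \<in> X" "p = g q" using inverse_on_X by auto
      then show ?thesis by blast
    qed
  qed
  moreover have xy: "(x, y) \<in> ?R\<^sup>*"
    using assms(2) unfolding comp_def by simp
  ultimately have yx: "(y, x) \<in> ?R\<^sup>*"
    by (rule symD[OF sym_rtrancl])
  show ?thesis
    unfolding comp_def using rtrancl_trans[OF xy] rtrancl_trans[OF yx] by blast
qed

lemma comp_reachable_by_funpow:
  assumes inverse_on_X: "\<And>z. z \<in> X \<Longrightarrow> g z \<in> X \<and> h z \<in> X \<and> g (h z) = z \<and> h (g z) = z"
    and "x \<in> X" and "y \<in> comp X g h x"
  shows "\<exists>k. y = (g ^^ k) x \<or> x = (g ^^ k) y"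
proof -
  have "(x, y) \<in> ({(z, g z) | z. z \<in> X} \<union> {(z, h z) | z. z \<in> X})\<^sup>*"
    using assms(3) unfolding comp_def by simp
  then show ?thesis
  proof (induct rule: rtrancl_induct)
    case base
    show ?case by (metis funpow_0)
  next
    case (step y z)
    from step.hyps(2) have y: "y \<in> X" and z: "z = g y \<or> z = h y" by auto
    from step.hyps(3) obtain k where k: "y = (g ^^ k) x \<or> x = (g ^^ k) y" by blast
    show ?case
    proof (cases k)
      case 0
      then have "y = x" using k by auto
      then have "z = (g ^^ 1) x \<or> x = (g ^^ 1) z" using z inverse_on_X[OF y] by auto
      then show ?thesis by blast
    next
      case (Suc j)
      show ?thesis using z k
      proof (elim disjE)
        assume "z = g y" "y = (g ^^ k) x"
        then show ?thesis by (metis funpow.simps(2) comp_apply)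
      next
        assume "z = g y" "x = (g ^^ k) y"
        then show ?thesis by (metis Suc funpow_Suc_right comp_apply)
      next
        assume "z = h y" "y = (g ^^ k) x"
        moreover have "(g ^^ j) x \<in> X"
          by (rule funpow_closed[OF _ \<open>x \<in> X\<close>]) (use inverse_on_X in blast)
        ultimately have "z = (g ^^ j) x" using Suc inverse_on_X by simp
        then show ?thesis by blast
      next
        assume "z = h y" "x = (g ^^ k) y"
        then have "x = (g ^^ Suc k) z" using inverse_on_X[OF y] by (simp only: funpow_Suc_right comp_apply)
        then show ?thesis by blast
      qed
    qed
  qed
qed

(* If (h \<circ> g)^k x = g x, the walk alternating between g- and h-edges from x to g x would
   have a middle edge joining a corner to itself, i.e. a fixed point of g or of h. The
   induction removes one step of h \<circ> g at each end of the walk. *)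
lemma funpow_comp_neq:
  assumes g: "perfect_matching_on X g" and h: "perfect_matching_on X h" and "x \<in> X"
  shows "((\<lambda>z. h (g z)) ^^ k) x \<noteq> g x"
proof -
  note g' = perfect_matching_onD[OF g] and h' = perfect_matching_onD[OF h]
  let ?\<tau> = "\<lambda>z. h (g z)"
  have \<tau>X: "(?\<tau> ^^ j) z \<in> X" if "z \<in> X" for j z
    by (rule funpow_closed[OF _ that]) (use g' h' in blast)
  show ?thesis
    using \<open>x \<in> X\<close>
  proof (induction k arbitrary: x rule: nat_induct2)
    case 0
    then show ?case using g' by fastforce
  next
    case 1
    then show ?case using g' h' by fastforce
  next
    case (step k)
    define y where "y = (?\<tau> ^^ k) (?\<tau> x)"
    have "?\<tau> x \<in> X" using \<tau>X[of x 1] step.prems by simp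
    then have "y \<in> X" unfolding y_def using \<tau>X by blast
    show ?case
    proof
      assume "(?\<tau> ^^ (k + 2)) x = g x"
      moreover have "(?\<tau> ^^ (k + 2)) x = ?\<tau> y"
        unfolding y_def by (metis add_2_eq_Suc' funpow.simps(2) funpow_Suc_right comp_apply)
      ultimately have "g y = h (g x)"
        using h'[of "g y"] g'[of y] \<open>y \<in> X\<close> by metis
      then have "y = g (?\<tau> x)"
        using g'[of y] \<open>y \<in> X\<close> by simp
      then show False using step.IH[OF \<open>?\<tau> x \<in> X\<close>] unfolding y_def by blast
    qed
  qed
qed

lemma perfect_matchings_comp_inverse:
  assumes "perfect_matching_on X g" and "perfect_matching_on X h" and "z \<in> X"
  shows "h (g z) \<in> X \<and> g (h z) \<in> X \<and> h (g (g (h z))) = z \<and> g (h (h (g z))) = z"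
  using perfect_matching_onD[OF assms(1)] perfect_matching_onD[OF assms(2)] assms(3) by simp

lemma partner_not_in_orbit:
  assumes g: "perfect_matching_on X g" and h: "perfect_matching_on X h" and x: "x \<in> X"
  shows "g x \<notin> comp X (\<lambda>z. h (g z)) (\<lambda>z. g (h z)) x"
proof
  assume "g x \<in> comp X (\<lambda>z. h (g z)) (\<lambda>z. g (h z)) x"
  then obtain k where "g x = ((\<lambda>z. h (g z)) ^^ k) x \<or> x = ((\<lambda>z. h (g z)) ^^ k) (g x)"
    using comp_reachable_by_funpow[OF perfect_matchings_comp_inverse[OF g h] x] by blast
  then show False
  proof
    assume "g x = ((\<lambda>z. h (g z)) ^^ k) x"
    then show False using funpow_comp_neq[OF g h x, of k] by simp
  next
    assume "x = ((\<lambda>z. h (g z)) ^^ k) (g x)"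
    moreover have "g x \<in> X" "g (g x) = x"
      using perfect_matching_onD[OF g x] by auto
    ultimately show False
      using funpow_comp_neq[OF g h \<open>g x \<in> X\<close>, of k] by metis
  qed
qed

lemma exists_alternating_partition:
  assumes g: "perfect_matching_on X g" and h: "perfect_matching_on X h"
  shows "\<exists>A\<subseteq>X. \<forall>x\<in>X. (g x \<in> A \<longleftrightarrow> x \<notin> A) \<and> (h x \<in> A \<longleftrightarrow> x \<notin> A)"
proof -
  note g' = perfect_matching_onD[OF g] and h' = perfect_matching_onD[OF h]
  define orb where "orb y = comp X (\<lambda>z. h (g z)) (\<lambda>z. g (h z)) y" for y
  have orb_eq: "orb z = orb y" if "z \<in> orb y" for y z
    unfolding orb_def
    by (rule comp_eq_if_mem[OF _ that[unfolded orb_def]]) (use perfect_matchings_comp_inverse[OF g h] in blast)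
  have orb_step: "orb (h (g y)) = orb y" "orb (g (h y)) = orb y" if "y \<in> X" for y
    using orb_eq comp_closed[OF comp_refl that] unfolding orb_def by blast+
  have orb_sep: "orb (g y) \<noteq> orb y" if "y \<in> X" for y
  proof
    assume "orb (g y) = orb y"
    then have "g y \<in> orb y"
      using comp_refl[of "g y" X "\<lambda>z. h (g z)" "\<lambda>z. g (h z)"] unfolding orb_def by simp
    then show False
      using partner_not_in_orbit[OF g h that] unfolding orb_def by blast
  qed
  \<comment> \<open>Each cycle of g \<union> h is the union of two orbits of h \<circ> g, exchanged by g; choose one of them.\<close>
  define S where "S y = (SOME P. P \<in> {orb y, orb (g y)})" for y
  define A where "A = {y \<in> X. orb y = S y}"
  have S_mem: "S y \<in> {orb y, orb (g y)}" for y
    unfolding S_def by (rule someI[of _ "orb y"]) simp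
  have S_g: "S (g y) = S y" if "y \<in> X" for y
    unfolding S_def using g' that by (simp add: insert_commute)
  have g_swaps: "g x \<in> A \<longleftrightarrow> x \<notin> A" if "x \<in> X" for x
    using S_mem[of x] S_g[OF that] orb_sep[OF that] g'[OF that] that unfolding A_def by auto
  have h_swaps: "h x \<in> A \<longleftrightarrow> x \<notin> A" if x: "x \<in> X" for x
  proof -
    have "orb (h x) = orb (g x)" "orb (g (h x)) = orb x"
      using orb_step[of "g x"] orb_step(2)[OF x] g'[OF x] by auto
    then have "S (h x) = S (g x)"
      using S_g[OF x] unfolding S_def by (simp add: insert_commute)
    then have "h x \<in> A \<longleftrightarrow> g x \<in> A"
      using \<open>orb (h x) = orb (g x)\<close> g'[OF x] h'[OF x] unfolding A_def by auto
    then show ?thesis using g_swaps[OF x] by blast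
  qed
  have "A \<subseteq> X"
    unfolding A_def by blast
  with g_swaps h_swaps show ?thesis
    by blast
qed

section \<open>Balancing partitions of a map\<close>

lemma mem_symdiff [simp]: "x \<in> symdiff A B \<longleftrightarrow> (x \<in> A) \<noteq> (x \<in> B)"
  unfolding symdiff_def by auto

locale map_graph =
  fixes X :: "'a set" and v f a :: "'a \<Rightarrow> 'a"
  assumes is_map: "is_map X v f a"
begin

lemma finite_corners: "finite X"
  using is_map unfolding is_map_def by simp

lemma closed [simp]:
  assumes "x \<in> X"
  shows "v x \<in> X" "f x \<in> X" "a x \<in> X"
  using is_map assms unfolding is_map_def by auto

lemma involutive [simp]:
  assumes "x \<in> X"
  shows "v (v x) = x" "f (f x) = x" "a (a x) = x"
  using is_map assms unfolding is_map_def by auto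

lemma no_fixpoint:
  assumes "x \<in> X"
  shows "v x \<noteq> x" "f x \<noteq> x" "a x \<noteq> x" "v x \<noteq> f x"
  using is_map assms unfolding is_map_def by auto

lemma f_v_commute:
  assumes x: "x \<in> X"
  shows "f (v x) = v (f x)"
proof -
  have "v (f (v x)) = f (f (v (f (v x))))"
    using x by simp
  also have "\<dots> = f x"
    using is_map x unfolding is_map_def by auto
  finally have "v (v (f (v x))) = v (f x)"
    by (rule arg_cong)
  then show ?thesis
    using x by simp
qed

lemma perfect_matchings:
  "perfect_matching_on X v" "perfect_matching_on X f" "perfect_matching_on X a"
  using no_fixpoint unfolding perfect_matching_on_def by auto

lemma sq_eq: "x \<in> X \<Longrightarrow> sq v f x = {x, v x, v (f x), f x}"
  unfolding sq_def by (simp add: f_v_commute)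

lemma sq_corners_distinct:
  assumes x: "x \<in> X"
  shows "x \<noteq> v x" "x \<noteq> f x" "x \<noteq> v (f x)" "v x \<noteq> f x" "v x \<noteq> v (f x)" "f x \<noteq> v (f x)"
proof -
  have fx: "f x \<in> X" using x by simp
  show "x \<noteq> v x" "x \<noteq> f x" "v x \<noteq> f x" "f x \<noteq> v (f x)"
    using no_fixpoint[OF x] no_fixpoint(1)[OF fx] by auto
  show "x \<noteq> v (f x)"
  proof
    assume "x = v (f x)"
    then have "v x = v (v (f x))" by (rule arg_cong)
    also have "\<dots> = f x" using fx by simp
    finally show False using no_fixpoint(4)[OF x] by simp
  qed
  show "v x \<noteq> v (f x)"
  proof
    assume "v x = v (f x)"
    then have "v (v x) = v (v (f x))" by (rule arg_cong)
    then have "x = f x" using x fx by (simp only: involutive)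
    then show False using no_fixpoint(2)[OF x] by metis
  qed
qed

lemma sq_v_eq: "x \<in> X \<Longrightarrow> sq v f (v x) = sq v f x"
  by (simp add: sq_eq f_v_commute insert_commute)

lemma sq_f_eq: "x \<in> X \<Longrightarrow> sq v f (f x) = sq v f x"
  by (simp add: sq_eq f_v_commute insert_commute)

lemma sq_eq_if_mem:
  assumes x: "x \<in> X" and "y \<in> sq v f x"
  shows "y \<in> X" "sq v f y = sq v f x"
proof -
  consider "y = x" | "y = v x" | "y = v (f x)" | "y = f x"
    using assms(2) sq_eq[OF x] by blast
  then have "y \<in> X \<and> sq v f y = sq v f x"
    by cases (simp_all add: x sq_v_eq sq_f_eq)
  then show "y \<in> X" "sq v f y = sq v f x"
    by blast+
qed

lemma balancing_iff:
  "balancing X v a A \<longleftrightarrow> A \<subseteq> X \<and> (\<forall>x\<in>X. (v x \<in> A \<longleftrightarrow> x \<notin> A) \<and> (a x \<in> A \<longleftrightarrow> x \<notin> A))"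
proof -
  have "(\<forall>x\<in>X. (x \<in> A) \<noteq> (v x \<in> A) \<and> (x \<in> A) = (a (v x) \<in> A)) \<longleftrightarrow>
      (\<forall>x\<in>X. (v x \<in> A \<longleftrightarrow> x \<notin> A) \<and> (a x \<in> A \<longleftrightarrow> x \<notin> A))"
    (is "(\<forall>x\<in>X. ?P x) \<longleftrightarrow> (\<forall>x\<in>X. ?Q x)")
  proof (intro iffI ballI)
    fix x assume P: "\<forall>x\<in>X. ?P x" and x: "x \<in> X"
    show "?Q x"
      using bspec[OF P x] bspec[OF P closed(1)[OF x]] x by auto
  next
    fix x assume Q: "\<forall>x\<in>X. ?Q x" and x: "x \<in> X"
    show "?P x"
      using bspec[OF Q x] bspec[OF Q closed(1)[OF x]] x by auto
  qed
  then show ?thesis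
    unfolding balancing_def by blast
qed

lemma balancing_subset: "balancing X v a A \<Longrightarrow> A \<subseteq> X"
  unfolding balancing_def by (rule conjunct1)

lemma balancing_swaps:
  assumes "balancing X v a A" and "x \<in> X"
  shows "v x \<in> A \<longleftrightarrow> x \<notin> A" "a x \<in> A \<longleftrightarrow> x \<notin> A"
  using assms unfolding balancing_iff by simp_all

lemma exists_balancing: "\<exists>A. balancing X v a A"
  using exists_alternating_partition[OF perfect_matchings(1,3)] unfolding balancing_iff by blast

lemma balanced_sq_iff:
  assumes "x \<in> X"
  shows "balanced v f A (sq v f x) \<longleftrightarrow> (x \<in> A \<longleftrightarrow> v (f x) \<in> A) \<and> (v x \<in> A \<longleftrightarrow> f x \<in> A)"
proof -
  have e: "v (v x) = x" "f (v x) = v (f x)" "v (v (f x)) = f x" "f (v (f x)) = v x" "f (f x) = x"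
    using f_v_commute[OF assms] f_v_commute[OF closed(2)[OF assms]] assms by simp_all
  show ?thesis
    unfolding balanced_def sq_eq[OF assms] ball_simps e
    using sq_corners_distinct[OF assms] sq_corners_distinct[OF assms, symmetric] by blast
qed

lemma imbalance_sq_iff:
  assumes "balancing X v a A" and "x \<in> X"
  shows "sq v f x \<in> imbalance X v f A \<longleftrightarrow> (x \<in> A \<longleftrightarrow> f x \<in> A)"
proof -
  have "v x \<in> A \<longleftrightarrow> x \<notin> A" "v (f x) \<in> A \<longleftrightarrow> f x \<notin> A"
    using balancing_swaps(1)[OF assms(1)] assms(2) by simp_all
  moreover have "sq v f x \<in> SQ X v f"
    unfolding SQ_def using assms(2) by blast
  ultimately show ?thesis
    by (auto simp: imbalance_def balanced_sq_iff[OF assms(2)])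
qed

lemma medges_v_sq: "x \<in> X \<Longrightarrow> medges v (sq v f x) = {{x, v x}, {f x, v (f x)}}"
  unfolding medges_def sq_eq by (auto simp: insert_commute)

lemma comp_image_closed:
  assumes "w \<in> comp X v a ` X" and "y \<in> w" and "y \<in> X"
  shows "v y \<in> w" "a y \<in> w"
proof -
  obtain z where w: "w = comp X v a z"
    using assms(1) by blast
  show "v y \<in> w" "a y \<in> w"
    using comp_closed[OF assms(2)[unfolded w] assms(3)] unfolding w .
qed

lemma Union_comp_closed:
  assumes S: "S \<subseteq> comp X v a ` X" and "y \<in> \<Union>S" and y: "y \<in> X"
  shows "v y \<in> \<Union>S" "a y \<in> \<Union>S"
proof -
  obtain w where w: "w \<in> S" "y \<in> w"
    using assms(2) by blast
  have "v y \<in> w" "a y \<in> w"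
    using comp_image_closed[OF subsetD[OF S w(1)] w(2) y] .
  with w show "v y \<in> \<Union>S" "a y \<in> \<Union>S"
    by blast+
qed

lemma Union_comp_subset:
  assumes "S \<subseteq> comp X v a ` X"
  shows "\<Union>S \<subseteq> X"
proof
  fix y assume "y \<in> \<Union>S"
  then obtain z where z: "z \<in> X" "y \<in> comp X v a z"
    using assms by blast
  have "comp X v a z \<subseteq> X"
    using comp_subset[of z X v a] z(1) by simp
  with z(2) show "y \<in> X" by blast
qed

lemma cobound_sq_iff:
  assumes S: "S \<subseteq> comp X v a ` X" and x: "x \<in> X"
  shows "sq v f x \<in> cobound X v f a S \<longleftrightarrow> (x \<in> \<Union>S) \<noteq> (f x \<in> \<Union>S)"
proof -
  have v_edge: "(\<exists>w\<in>S. {y, v y} \<subseteq> w) \<longleftrightarrow> y \<in> \<Union>S" if y: "y \<in> X" for y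
  proof
    assume "\<exists>w\<in>S. {y, v y} \<subseteq> w"
    then show "y \<in> \<Union>S" by blast
  next
    assume "y \<in> \<Union>S"
    then obtain w where w: "w \<in> S" "y \<in> w" by blast
    have "v y \<in> w"
      using comp_image_closed(1)[OF subsetD[OF S w(1)] w(2) y] .
    with w show "\<exists>w\<in>S. {y, v y} \<subseteq> w" by blast
  qed
  have "x \<notin> {f x, v (f x)}"
    using sq_corners_distinct[OF x] by simp
  then have "{x, v x} \<noteq> {f x, v (f x)}" by blast
  have "sq v f x \<in> SQ X v f"
    unfolding SQ_def using x by blast
  then have "sq v f x \<in> cobound X v f a S \<longleftrightarrow>
      odd (card {e \<in> {{x, v x}, {f x, v (f x)}}. \<exists>w\<in>S. e \<subseteq> w})"
    unfolding cobound_def by (simp add: medges_v_sq[OF x])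
  also have "\<dots> \<longleftrightarrow> (\<exists>w\<in>S. {x, v x} \<subseteq> w) \<noteq> (\<exists>w\<in>S. {f x, v (f x)} \<subseteq> w)"
    by (rule odd_card_filter_doubleton) fact
  also have "\<dots> \<longleftrightarrow> (x \<in> \<Union>S) \<noteq> (f x \<in> \<Union>S)"
    unfolding v_edge[OF x] v_edge[OF closed(2)[OF x]] ..
  finally show ?thesis .
qed

lemma balancing_symdiff:
  assumes A: "balancing X v a A" and U: "U \<subseteq> X"
    and U_closed: "\<And>y. y \<in> U \<Longrightarrow> v y \<in> U \<and> a y \<in> U"
  shows "balancing X v a (symdiff A U)"
  unfolding balancing_iff
proof (intro conjI ballI)
  show "symdiff A U \<subseteq> X"
    using balancing_subset[OF A] U unfolding symdiff_def by blast
next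
  fix x assume x: "x \<in> X"
  have "g x \<in> U \<longleftrightarrow> x \<in> U" if "g = v \<or> g = a" for g
  proof
    assume "g x \<in> U"
    then have "g (g x) \<in> U" using U_closed that by blast
    then show "x \<in> U" using x that by auto
  next
    assume "x \<in> U"
    then show "g x \<in> U" using U_closed that by blast
  qed
  with balancing_swaps[OF A x]
  show "v x \<in> symdiff A U \<longleftrightarrow> x \<notin> symdiff A U" "a x \<in> symdiff A U \<longleftrightarrow> x \<notin> symdiff A U"
    by simp_all
qed

lemma balancing_symdiff_Union:
  assumes A: "balancing X v a A" and S: "S \<subseteq> comp X v a ` X"
  shows "balancing X v a (symdiff A (\<Union>S))"
proof (rule balancing_symdiff[OF A Union_comp_subset[OF S]])
  fix y assume y: "y \<in> \<Union>S"
  then have "y \<in> X"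
    using Union_comp_subset[OF S] by blast
  then show "v y \<in> \<Union>S \<and> a y \<in> \<Union>S"
    using Union_comp_closed[OF S y] by blast
qed

lemma imbalance_symdiff:
  assumes A: "balancing X v a A" and S: "S \<subseteq> comp X v a ` X"
  shows "imbalance X v f (symdiff A (\<Union>S)) = symdiff (imbalance X v f A) (cobound X v f a S)"
proof (rule set_eqI)
  note B = balancing_symdiff_Union[OF A S]
  fix s
  show "s \<in> imbalance X v f (symdiff A (\<Union>S)) \<longleftrightarrow>
      s \<in> symdiff (imbalance X v f A) (cobound X v f a S)"
  proof (cases "s \<in> SQ X v f")
    case False
    then show ?thesis by (simp add: imbalance_def cobound_def)
  next
    case True
    then obtain x where x: "x \<in> X" and s: "s = sq v f x"
      unfolding SQ_def by blast
    show ?thesis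
      unfolding s mem_symdiff imbalance_sq_iff[OF B x] imbalance_sq_iff[OF A x] cobound_sq_iff[OF S x]
      by argo
  qed
qed

lemma balancing_eq_symdiff_Union:
  assumes A0: "balancing X v a A0" and A: "balancing X v a A"
  obtains S where "S \<subseteq> comp X v a ` X" and "A = symdiff A0 (\<Union>S)"
proof -
  let ?D = "symdiff A A0"
  have D_X: "?D \<subseteq> X"
    using balancing_subset[OF A] balancing_subset[OF A0] unfolding symdiff_def by blast
  have D_closed: "v y \<in> ?D \<and> a y \<in> ?D" if "y \<in> ?D" for y
  proof -
    have y: "y \<in> X" using that D_X by blast
    show ?thesis
      using balancing_swaps[OF A y] balancing_swaps[OF A0 y] that by simp
  qed
  have "\<Union>(comp X v a ` ?D) = ?D"
  proof
    show "\<Union>(comp X v a ` ?D) \<subseteq> ?D"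
    proof (rule Union_least)
      fix w assume "w \<in> comp X v a ` ?D"
      then obtain y where "y \<in> ?D" and w: "w = comp X v a y" by blast
      show "w \<subseteq> ?D"
        unfolding w by (rule comp_subset[OF \<open>y \<in> ?D\<close> D_closed])
    qed
    show "?D \<subseteq> \<Union>(comp X v a ` ?D)"
    proof
      fix y assume "y \<in> ?D"
      then show "y \<in> \<Union>(comp X v a ` ?D)"
        using comp_refl[of y X v a] by blast
    qed
  qed
  moreover have "A = symdiff A0 ?D"
    unfolding symdiff_def by blast
  ultimately have "A = symdiff A0 (\<Union>(comp X v a ` ?D))"
    by simp
  moreover have "comp X v a ` ?D \<subseteq> comp X v a ` X"
    using D_X by (rule image_mono)
  ultimately show ?thesis
    by (rule that[rotated])
qed

lemma card_monochromatic_eq: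
  assumes A: "balancing X v a A" and W: "W \<subseteq> X"
    and W_closed: "\<And>y. y \<in> W \<Longrightarrow> f y \<in> W \<and> a y \<in> W"
  shows "card {y \<in> W \<inter> A. f y \<in> A} = card {y \<in> W - A. f y \<notin> A}"
proof -
  let ?P = "{y. f y \<in> A}"
  have fin: "finite W"
    using finite_subset[OF W finite_corners] .
  have corner: "y \<in> X" if "y \<in> W" for y
    using W that by blast
  have "card (W \<inter> A) = card (W - A)"
    by (rule card_eq_if_swapped_by_involution[where g = a])
      (use W_closed corner balancing_swaps(2)[OF A] in \<open>simp_all\<close>)
  moreover have "card (W \<inter> A - ?P) = card ((W - A) \<inter> ?P)"
    by (rule card_eq_if_swapped_by_involution[where g = f])
      (use W_closed corner in \<open>simp_all\<close>)
  moreover have "card (W \<inter> A) = card (W \<inter> A \<inter> ?P) + card (W \<inter> A - ?P)"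
    "card (W - A) = card ((W - A) \<inter> ?P) + card (W - A - ?P)"
    using card_Int_Diff[of "W \<inter> A" ?P] card_Int_Diff[of "W - A" ?P] fin by simp_all
  ultimately have "card (W \<inter> A \<inter> ?P) = card (W - A - ?P)"
    by linarith
  moreover have "{y \<in> W \<inter> A. f y \<in> A} = W \<inter> A \<inter> ?P" "{y \<in> W - A. f y \<notin> A} = W - A - ?P"
    by blast+
  ultimately show ?thesis
    by simp
qed

lemma f_edge_pairs_eq_image:
  assumes A: "balancing X v a A" and W: "W \<subseteq> X" and W_closed: "\<And>y. y \<in> W \<Longrightarrow> f y \<in> W"
  shows "{(s, e). s \<in> imbalance X v f A \<and> e \<in> medges f s \<and> e \<subseteq> W} =
    (\<lambda>y. (sq v f y, {y, f y})) ` {y \<in> W. y \<in> A \<longleftrightarrow> f y \<in> A}"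
proof (intro equalityI subsetI)
  fix p assume "p \<in> {(s, e). s \<in> imbalance X v f A \<and> e \<in> medges f s \<and> e \<subseteq> W}"
  then obtain s e where p: "p = (s, e)" and s: "s \<in> imbalance X v f A"
    and e: "e \<in> medges f s" "e \<subseteq> W"
    by blast
  obtain x where x: "x \<in> X" "s = sq v f x"
    using s unfolding imbalance_def SQ_def by blast
  obtain y where y: "y \<in> s" "e = {y, f y}"
    using e(1) unfolding medges_def by blast
  have y_X: "y \<in> X" and s_y: "s = sq v f y"
    using sq_eq_if_mem[OF x(1)] y(1) x(2) by simp_all
  have "y \<in> A \<longleftrightarrow> f y \<in> A"
    using s imbalance_sq_iff[OF A y_X] s_y by simp
  moreover have "y \<in> W"
    using e(2) y(2) by blast
  moreover have "p = (sq v f y, {y, f y})"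
    unfolding p s_y y(2) ..
  ultimately show "p \<in> (\<lambda>y. (sq v f y, {y, f y})) ` {y \<in> W. y \<in> A \<longleftrightarrow> f y \<in> A}"
    by blast
next
  fix p assume "p \<in> (\<lambda>y. (sq v f y, {y, f y})) ` {y \<in> W. y \<in> A \<longleftrightarrow> f y \<in> A}"
  then obtain y where y_W: "y \<in> W" and y_A: "y \<in> A \<longleftrightarrow> f y \<in> A" and p: "p = (sq v f y, {y, f y})"
    by blast
  have "sq v f y \<in> imbalance X v f A"
    using imbalance_sq_iff[OF A] W y_W y_A by blast
  moreover have "{y, f y} \<in> medges f (sq v f y)"
    unfolding medges_def sq_def by blast
  moreover have "{y, f y} \<subseteq> W"
    using y_W W_closed by blast
  ultimately show "p \<in> {(s, e). s \<in> imbalance X v f A \<and> e \<in> medges f s \<and> e \<subseteq> W}"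
    unfolding p by blast
qed

lemma card_eq_twice_card_f_edge_pairs:
  assumes M: "M \<subseteq> X" and M_closed: "\<And>y. y \<in> M \<Longrightarrow> f y \<in> M"
  shows "card M = 2 * card ((\<lambda>y. (sq v f y, {y, f y})) ` M)"
proof (rule card_eq_twice_card_image)
  show "finite M"
    using finite_subset[OF M finite_corners] .
  show "perfect_matching_on M f"
    unfolding perfect_matching_on_def
  proof
    fix y assume "y \<in> M"
    moreover have "y \<in> X"
      using \<open>y \<in> M\<close> M by blast
    ultimately show "f y \<in> M \<and> f (f y) = y \<and> f y \<noteq> y"
      using M_closed[of y] no_fixpoint(2)[of y] by simp
  qed
  show "(sq v f z, {z, f z}) = (sq v f y, {y, f y}) \<longleftrightarrow> z = y \<or> z = f y" if "y \<in> M" for y z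
  proof
    assume "(sq v f z, {z, f z}) = (sq v f y, {y, f y})"
    then have "{z, f z} = {y, f y}"
      by simp
    then show "z = y \<or> z = f y"
      by (auto simp: doubleton_eq_iff)
  next
    have "y \<in> X"
      using \<open>y \<in> M\<close> M by blast
    moreover assume "z = y \<or> z = f y"
    ultimately show "(sq v f z, {z, f z}) = (sq v f y, {y, f y})"
      using sq_f_eq by (auto simp: insert_commute)
  qed
qed

lemma deg_imbalance:
  assumes A: "balancing X v a A" and W: "W \<subseteq> X"
    and W_closed: "\<And>y. y \<in> W \<Longrightarrow> f y \<in> W \<and> a y \<in> W"
  shows "deg f (imbalance X v f A) W = card {y \<in> W \<inter> A. f y \<in> A}"
proof -
  define M where "M = {y \<in> W. y \<in> A \<longleftrightarrow> f y \<in> A}"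
  have M_X: "M \<subseteq> X"
    using W unfolding M_def by blast
  have M_closed: "f y \<in> M" if "y \<in> M" for y
  proof -
    have "y \<in> X"
      using that M_X by blast
    then show ?thesis
      using that W_closed[of y] unfolding M_def by simp
  qed
  have "card M = card {y \<in> W \<inter> A. f y \<in> A} + card {y \<in> W - A. f y \<notin> A}"
  proof -
    have "M = {y \<in> W \<inter> A. f y \<in> A} \<union> {y \<in> W - A. f y \<notin> A}"
      unfolding M_def by blast
    moreover have "finite {y \<in> W \<inter> A. f y \<in> A}" "finite {y \<in> W - A. f y \<notin> A}"
      using finite_subset[OF W finite_corners] by simp_all
    ultimately show ?thesis
      by (simp add: card_Un_disjoint disjoint_iff)
  qed
  moreover have "card M = 2 * card ((\<lambda>y. (sq v f y, {y, f y})) ` M)"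
    by (rule card_eq_twice_card_f_edge_pairs[OF M_X]) (use M_closed in blast)
  moreover have "card {y \<in> W \<inter> A. f y \<in> A} = card {y \<in> W - A. f y \<notin> A}"
    by (rule card_monochromatic_eq[OF A W]) (use W_closed in blast)
  moreover have "deg f (imbalance X v f A) W = card ((\<lambda>y. (sq v f y, {y, f y})) ` M)"
    unfolding deg_def M_def by (rule arg_cong[where f = card], rule f_edge_pairs_eq_image[OF A W])
      (use W_closed in blast)
  ultimately show ?thesis
    by linarith
qed

lemma imbalance_D_cycle:
  assumes A: "balancing X v a A"
  shows "D_cycle X v f a (imbalance X v f A)"
  unfolding D_cycle_def
proof (intro conjI ballI)
  show "imbalance X v f A \<subseteq> SQ X v f"
    unfolding imbalance_def by blast
next
  fix W assume "W \<in> comp X f a ` X"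
  then obtain x where x: "x \<in> X" and W: "W = comp X f a x"
    by blast
  have W_X: "W \<subseteq> X"
    unfolding W by (rule comp_subset[OF x]) simp
  have W_closed: "f y \<in> W \<and> a y \<in> W" if "y \<in> W" for y
    using comp_closed[OF that[unfolded W] subsetD[OF W_X that]] unfolding W by blast
  let ?N = "{y \<in> W \<inter> A. f y \<in> A}"
  have "perfect_matching_on ?N f"
    unfolding perfect_matching_on_def
  proof
    fix y assume y: "y \<in> ?N"
    then have "y \<in> X"
      using W_X by blast
    with y show "f y \<in> ?N \<and> f (f y) = y \<and> f y \<noteq> y"
      using W_closed[of y] no_fixpoint(2)[of y] by simp
  qed
  moreover have "finite ?N"
    using finite_subset[OF W_X finite_corners] by simp
  ultimately have "even (card ?N)"
    using even_card_if_perfect_matching by blast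
  moreover have "deg f (imbalance X v f A) W = card ?N"
    by (rule deg_imbalance[OF A W_X]) (use W_closed in blast)
  ultimately show "even (deg f (imbalance X v f A) W)"
    by simp
qed

lemma imbalances_eq_coset:
  assumes A0: "balancing X v a A0"
  shows "imbalances X v f a = (\<lambda>b. symdiff (imbalance X v f A0) b) ` cobspace X v f a"
proof (intro equalityI subsetI)
  fix I assume "I \<in> imbalances X v f a"
  then obtain A where A: "balancing X v a A" and I: "I = imbalance X v f A"
    unfolding imbalances_def by blast
  obtain S where S: "S \<subseteq> comp X v a ` X" and A_eq: "A = symdiff A0 (\<Union>S)"
    using balancing_eq_symdiff_Union[OF A0 A] .
  have "I = symdiff (imbalance X v f A0) (cobound X v f a S)"
    unfolding I A_eq imbalance_symdiff[OF A0 S] ..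
  moreover have "cobound X v f a S \<in> cobspace X v f a"
    unfolding cobspace_def using S by blast
  ultimately show "I \<in> (\<lambda>b. symdiff (imbalance X v f A0) b) ` cobspace X v f a"
    by blast
next
  fix I assume "I \<in> (\<lambda>b. symdiff (imbalance X v f A0) b) ` cobspace X v f a"
  then obtain S where S: "S \<subseteq> comp X v a ` X"
    and I: "I = symdiff (imbalance X v f A0) (cobound X v f a S)"
    unfolding cobspace_def by blast
  have "I = imbalance X v f (symdiff A0 (\<Union>S))"
    unfolding I imbalance_symdiff[OF A0 S] ..
  then show "I \<in> imbalances X v f a"
    unfolding imbalances_def using balancing_symdiff_Union[OF A0 S] by blast
qed

end

theorem theorem4p3:
  assumes "is_map X v f a"
  shows "\<exists>c. D_cycle X v f a c \<and>
           imbalances X v f a = (\<lambda>b. symdiff c b) ` cobspace X v f a"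
proof -
  interpret map_graph X v f a
    by (rule map_graph.intro) fact
  obtain A0 where A0: "balancing X v a A0"
    using exists_balancing by blast
  show ?thesis
    using imbalance_D_cycle[OF A0] imbalances_eq_coset[OF A0] by blast
qed

end
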